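(* For every integer $n \geqslant 5$, the line graph $L(K_n)$ of the complete graph $K_n$ is not representable.
   Context: All graphs are finite and simple. For a word $W$ over an alphabet, two distinct letters $x,y$ alternate in $W$ if both occur in $W$ and, after erasing all other letters from $W$, one obtains a word of the form $xyxy\ldots$ or $yxyx\ldots$ (an alternating word of any length). A graph $G=(V,E)$ is representable if there exists a word $W$ over the alphabet $V$ in which every vertex occurs, such that for all distinct $x,y\in V$, the letters $x$ and $y$ alternate in $W$ if and only if $(x,y)\in E$. The line graph $L(G)$ of a graph $G$ has the edges of $G$ as vertices, two of them being adjacent in $L(G)$ iff they share an endpoint in $G$. *)

theory Defs
  imports Main
begin

text \<open>A finite simple graph is given by a vertex set V and an edge set E,
  each edge being a two-element set {x,y} of vertices.\<close>

definition alternating_word :: "'a \<Rightarrow> 'a \<Rightarrow> 'a list \<Rightarrow> bool" where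
  "alternating_word x y w \<longleftrightarrow>
     w = map (\<lambda>i. if even i then x else y) [0..<length w] \<or>
     w = map (\<lambda>i. if even i then y else x) [0..<length w]"

definition alternate :: "'a list \<Rightarrow> 'a \<Rightarrow> 'a \<Rightarrow> bool" where
  "alternate W x y \<longleftrightarrow> x \<in> set W \<and> y \<in> set W \<and>
     alternating_word x y (filter (\<lambda>z. z = x \<or> z = y) W)"

definition representable :: "'a set \<Rightarrow> 'a set set \<Rightarrow> bool" where
  "representable V E \<longleftrightarrow> (\<exists>W. set W = V \<and>
     (\<forall>x\<in>V. \<forall>y\<in>V. x \<noteq> y \<longrightarrow> (alternate W x y \<longleftrightarrow> {x, y} \<in> E)))"

definition line_graph_edges :: "'a set set \<Rightarrow> 'a set set set" where
  "line_graph_edges E = {{e, f} | e f. e \<in> E \<and> f \<in> E \<and> e \<noteq> f \<and> e \<inter> f \<noteq> {}}"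

definition K_edges :: "nat \<Rightarrow> nat set set" where
  "K_edges n = {{i, j} | i j. i < n \<and> j < n \<and> i \<noteq> j}"

end

theory Submission
  imports Defs
begin

text \<open>Write balance W x y p for the number of x minus the number of y among the first
  p letters of W. Two letters alternate iff their balance takes at most two consecutive
  values. Fix a vertex x; shifting the balance of each neighbour v against x into
  {0, 1} yields a 0/1 sequence t v, and two neighbours alternate iff their sequences
  are comparable pointwise. Hence the neighbourhood of a vertex of a representable graph
  is a comparability graph. In L(K_n), n \<ge> 5, the edges {0, i} and {1, i}, i = 2, 3, 4,
  lie in the neighbourhood of {0, 1} and induce a triangular prism, which is not a
  comparability graph.\<close>

definition balance :: "'a list \<Rightarrow> 'a \<Rightarrow> 'a \<Rightarrow> nat \<Rightarrow> int" where
  "balance W x y p = int (count_list (take p W) x) - int (count_list (take p W) y)"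

definition leads :: "'a list \<Rightarrow> 'a \<Rightarrow> 'a \<Rightarrow> bool" where
  "leads W x y \<longleftrightarrow> (\<forall>p. balance W x y p \<in> {0, 1})"

abbreviation alt_word :: "'a \<Rightarrow> 'a \<Rightarrow> nat \<Rightarrow> 'a list" where
  "alt_word x y k \<equiv> map (\<lambda>i. if even i then x else y) [0..<k]"

lemma balance_0 [simp]: "balance W x y 0 = 0"
  by (simp add: balance_def)

lemma balance_swap: "balance W y x p = - balance W x y p"
  by (simp add: balance_def)

lemma balance_snoc_length:
  "balance (W @ [z]) x y (Suc (length W)) =
     balance W x y (length W) + (if z = x then 1 else 0) - (if z = y then 1 else 0)"
  by (simp add: balance_def)

lemma take_alt_word: "take q (alt_word x y k) = alt_word x y (min q k)"
  by (simp add: take_map min_def)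

lemma balance_alt_word:
  assumes "x \<noteq> y"
  shows "balance (alt_word x y k) x y q = (if odd (min q k) then 1 else 0)"
proof -
  have "count_list (alt_word x y m) x = (m + 1) div 2 \<and> count_list (alt_word x y m) y = m div 2" for m
    using assms by (induction m) auto
  then show ?thesis
    unfolding balance_def take_alt_word by auto
qed

lemma leads_alt_word: "x \<noteq> y \<Longrightarrow> leads (alt_word x y k) x y"
  by (simp add: leads_def balance_alt_word)

lemma balance_filter:
  assumes "P x" "P y"
  shows "balance W x y p = balance (filter P W) x y (length (filter P (take p W)))"
proof -
  have "filter P W = filter P (take p W) @ filter P (drop p W)"
    by (metis append_take_drop_id filter_append)
  then have "take (length (filter P (take p W))) (filter P W) = filter P (take p W)"
    by simp
  moreover have "count_list (filter P ws) z = count_list ws z" if "P z" for ws z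
    using that by (induction ws) auto
  ultimately show ?thesis
    using assms by (simp add: balance_def)
qed

lemma leads_filter_imp_leads:
  assumes "P x" "P y" "leads (filter P W) x y"
  shows "leads W x y"
  unfolding leads_def
proof
  fix p
  show "balance W x y p \<in> {0, 1}"
    using assms(3) unfolding leads_def balance_filter[of P x y W p, OF assms(1,2)] by blast
qed

lemma leads_imp_filter_alt_word:
  assumes "x \<noteq> y" "leads W x y"
  defines "P \<equiv> \<lambda>z. z = x \<or> z = y"
  shows "filter P W = alt_word x y (length (filter P W))"
  using assms(2)
proof (induction W rule: rev_induct)
  case Nil
  then show ?case by simp
next
  case (snoc z W)
  have "balance W x y p = balance (W @ [z]) x y (min p (length W))" for p
    by (simp add: balance_def min_def)
  then have "leads W x y"
    using snoc.prems by (simp add: leads_def)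
  then have IH: "filter P W = alt_word x y (length (filter P W))"
    by (rule snoc.IH)
  define k where "k = length (filter P W)"
  have "balance W x y (length W) = (if odd k then 1 else 0)"
    using balance_filter[of P x y W "length W"] balance_alt_word[OF assms(1), of k k] IH
    by (simp add: P_def k_def)
  moreover have "balance (W @ [z]) x y (Suc (length W)) \<in> {0, 1}"
    using snoc.prems by (simp add: leads_def)
  ultimately have "(z = x \<longrightarrow> even k) \<and> (z = y \<longrightarrow> odd k)"
    using assms(1) by (auto simp: balance_snoc_length split: if_splits)
  then show ?case
    using IH by (auto simp: P_def k_def)
qed

lemma alternate_iff_leads:
  assumes "x \<noteq> y"
  shows "alternate W x y \<longleftrightarrow> x \<in> set W \<and> y \<in> set W \<and> (leads W x y \<or> leads W y x)"
proof -
  define P where "P = (\<lambda>z. z = x \<or> z = y)"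
  have P_sym: "(\<lambda>z. z = y \<or> z = x) = P"
    by (auto simp: P_def)
  have "alternating_word x y (filter P W) \<longleftrightarrow> leads W x y \<or> leads W y x"
  proof
    assume "alternating_word x y (filter P W)"
    then obtain k where "filter P W = alt_word x y k \<or> filter P W = alt_word y x k"
      unfolding alternating_word_def by blast
    then have "leads (filter P W) x y \<or> leads (filter P W) y x"
      using leads_alt_word[OF assms] leads_alt_word[OF assms[symmetric]] by auto
    then show "leads W x y \<or> leads W y x"
      using leads_filter_imp_leads[of P] by (auto simp: P_def)
  next
    assume "leads W x y \<or> leads W y x"
    then show "alternating_word x y (filter P W)"
      using leads_imp_filter_alt_word[OF assms] leads_imp_filter_alt_word[OF assms[symmetric]]
      unfolding alternating_word_def P_sym P_def by blast
  qed
  then show ?thesis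
    by (simp add: alternate_def P_def)
qed

lemma leads_or_leads_iff_balance_spread_le_1:
  "leads W x y \<or> leads W y x \<longleftrightarrow> (\<forall>p q. balance W x y p \<le> balance W x y q + 1)"
  using balance_0[of W x y] unfolding leads_def balance_swap[of W y x]
  by (smt (verit, best) insertCI insertE singletonD)

lemma alternate_iff_balance_spread_le_1:
  assumes "x \<noteq> y" "x \<in> set W" "y \<in> set W"
  shows "alternate W x y \<longleftrightarrow> (\<forall>p q. balance W x y p \<le> balance W x y q + 1)"
  using assms by (simp add: alternate_iff_leads leads_or_leads_iff_balance_spread_le_1)

lemma spread_le_1_iff_le_or_ge:
  fixes f g h :: "'i \<Rightarrow> int"
  assumes f: "\<And>i. f i \<in> {0, 1}" and g: "\<And>i. g i \<in> {0, 1}"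
    and h: "\<And>i. h i = f i - g i + d"
  shows "(\<forall>i j. h i \<le> h j + 1) \<longleftrightarrow> f \<le> g \<or> g \<le> f"
proof
  assume spread: "\<forall>i j. h i \<le> h j + 1"
  show "f \<le> g \<or> g \<le> f"
  proof (rule ccontr)
    assume "\<not> (f \<le> g \<or> g \<le> f)"
    then obtain i j where "f i > g i" "g j > f j"
      by (auto simp: le_fun_def not_le)
    then show False
      using spread[rule_format, of i j] h[of i] h[of j] f[of i] f[of j] g[of i] g[of j] by auto
  qed
next
  assume "f \<le> g \<or> g \<le> f"
  show "\<forall>i j. h i \<le> h j + 1"
  proof (intro allI)
    fix i j
    have "f i \<le> g i \<and> f j \<le> g j \<or> g i \<le> f i \<and> g j \<le> f j"
      using \<open>f \<le> g \<or> g \<le> f\<close> by (auto simp: le_fun_def)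
    then show "h i \<le> h j + 1"
      using h[of i] h[of j] f[of i] f[of j] g[of i] g[of j] by auto
  qed
qed

lemma balance_eq_diff: "balance W u v p = balance W u x p - balance W v x p"
  by (simp add: balance_def)

lemma comparability_of_alternate_neighbours:
  assumes "\<And>v. v \<in> N \<Longrightarrow> v \<noteq> x \<and> alternate W x v"
  obtains t :: "'a \<Rightarrow> nat \<Rightarrow> int"
  where "\<And>u v. u \<in> N \<Longrightarrow> v \<in> N \<Longrightarrow> u \<noteq> v \<Longrightarrow> alternate W u v \<longleftrightarrow> t u \<le> t v \<or> t v \<le> t u"
proof
  define c where "c v = (if leads W x v then 1 else 0 :: int)" for v
  define t where "t v p = balance W v x p + c v" for v p
  have t_01: "t v p \<in> {0, 1}" if "v \<in> N" for v p
  proof -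
    have "leads W x v \<or> leads W v x"
      using assms[OF that] alternate_iff_leads by metis
    then show ?thesis
      unfolding t_def c_def leads_def by (auto simp: balance_swap[of W v x])
  qed
  fix u v
  assume "u \<in> N" "v \<in> N" "u \<noteq> v"
  then have "u \<in> set W" "v \<in> set W"
    using assms by (auto simp: alternate_def)
  have shift: "balance W u v p = t u p - t v p + (c v - c u)" for p
    by (simp add: t_def balance_eq_diff[of W u v p x])
  have "alternate W u v \<longleftrightarrow> (\<forall>p q. balance W u v p \<le> balance W u v q + 1)"
    by (rule alternate_iff_balance_spread_le_1) fact+
  also have "\<dots> \<longleftrightarrow> t u \<le> t v \<or> t v \<le> t u"
    by (rule spread_le_1_iff_le_or_ge[OF t_01 t_01 shift]) fact+
  finally show "alternate W u v \<longleftrightarrow> t u \<le> t v \<or> t v \<le> t u" .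
qed

lemma representable_neighbourhood_comparability:
  assumes "representable V E" "x \<in> V" "N \<subseteq> V"
    and "\<And>v. v \<in> N \<Longrightarrow> v \<noteq> x \<and> {x, v} \<in> E"
  obtains t :: "'a \<Rightarrow> nat \<Rightarrow> int"
  where "\<And>u v. u \<in> N \<Longrightarrow> v \<in> N \<Longrightarrow> u \<noteq> v \<Longrightarrow> {u, v} \<in> E \<longleftrightarrow> t u \<le> t v \<or> t v \<le> t u"
proof -
  obtain W where W: "\<forall>u\<in>V. \<forall>v\<in>V. u \<noteq> v \<longrightarrow> (alternate W u v \<longleftrightarrow> {u, v} \<in> E)"
    using assms(1) unfolding representable_def by blast
  have neighbours: "v \<noteq> x \<and> alternate W x v" if "v \<in> N" for v
  proof -
    have "v \<in> V" "v \<noteq> x" "{x, v} \<in> E"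
      using assms(3,4) that by auto
    then show ?thesis
      using W[rule_format, OF assms(2) \<open>v \<in> V\<close>] by simp
  qed
  obtain t :: "'a \<Rightarrow> nat \<Rightarrow> int" where
    t: "\<And>u v. u \<in> N \<Longrightarrow> v \<in> N \<Longrightarrow> u \<noteq> v \<Longrightarrow> alternate W u v \<longleftrightarrow> t u \<le> t v \<or> t v \<le> t u"
    using comparability_of_alternate_neighbours[OF neighbours] by blast
  show thesis
  proof
    fix u v
    assume "u \<in> N" "v \<in> N" "u \<noteq> v"
    then show "{u, v} \<in> E \<longleftrightarrow> t u \<le> t v \<or> t v \<le> t u"
      using W[rule_format, of u v] t[of u v] assms(3) by auto
  qed
qed

lemma triangular_prism_not_comparability_wlog:
  fixes p q :: "nat \<Rightarrow> 'b::preorder"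
  assumes "p a \<le> q a" "a < 3"
    and p_chain: "\<And>i j. i < 3 \<Longrightarrow> j < 3 \<Longrightarrow> i \<noteq> j \<Longrightarrow> p i \<le> p j \<or> p j \<le> p i"
    and matched: "\<And>i. i < 3 \<Longrightarrow> p i \<le> q i \<or> q i \<le> p i"
    and cross: "\<And>i j. i < 3 \<Longrightarrow> j < 3 \<Longrightarrow> i \<noteq> j \<Longrightarrow> \<not> p i \<le> q j \<and> \<not> q j \<le> p i"
  shows False
proof -
  have p_above: "p a \<le> p i" if "i < 3" "i \<noteq> a" for i
    using p_chain[of i a] cross[of i a] order_trans[of "p i" "p a" "q a"] that assms(1,2)
    by blast
  have q_below: "q i \<le> p i" if "i < 3" "i \<noteq> a" for i
    using matched[of i] cross[of a i] order_trans[of "p a" "p i" "q i"] p_above[OF that]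
      that assms(2) by blast
  define j k where "j = (a + 1) mod 3" and "k = (a + 2) mod 3"
  have jk: "j < 3" "k < 3" "j \<noteq> a" "k \<noteq> a" "j \<noteq> k"
    using \<open>a < 3\<close> unfolding j_def k_def by presburger+
  show False
    using p_chain[of j k] cross[of k j] cross[of j k] q_below[of j] q_below[of k] jk
      order_trans[of "q j" "p j" "p k"] order_trans[of "q k" "p k" "p j"] by blast
qed

lemma triangular_prism_not_comparability:
  fixes p q :: "nat \<Rightarrow> 'b::preorder"
  assumes "\<And>i j. i < 3 \<Longrightarrow> j < 3 \<Longrightarrow> i \<noteq> j \<Longrightarrow> p i \<le> p j \<or> p j \<le> p i"
    and "\<And>i j. i < 3 \<Longrightarrow> j < 3 \<Longrightarrow> i \<noteq> j \<Longrightarrow> q i \<le> q j \<or> q j \<le> q i"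
    and "\<And>i. i < 3 \<Longrightarrow> p i \<le> q i \<or> q i \<le> p i"
    and "\<And>i j. i < 3 \<Longrightarrow> j < 3 \<Longrightarrow> i \<noteq> j \<Longrightarrow> \<not> p i \<le> q j \<and> \<not> q j \<le> p i"
  shows False
proof -
  have "p 0 \<le> q 0 \<or> q 0 \<le> p 0"
    by (rule assms(3)) simp
  then show False
  proof
    assume "p 0 \<le> q 0"
    then show False
      by (rule triangular_prism_not_comparability_wlog) (use assms in auto)
  next
    assume "q 0 \<le> p 0"
    then show False
    proof (rule triangular_prism_not_comparability_wlog)
      show "q i \<le> p i \<or> p i \<le> q i" if "i < 3" for i
        using assms(3)[OF that] by blast
      show "\<not> q i \<le> p j \<and> \<not> p j \<le> q i" if "i < 3" "j < 3" "i \<noteq> j" for i j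
        using assms(4)[of j i] that by auto
    qed (use assms(2) in auto)
  qed
qed

lemma triangular_prism_in_line_graph_not_comparability:
  fixes t :: "nat set \<Rightarrow> 'b::preorder"
  defines "N \<equiv> (\<lambda>i. {0, i + 2}) ` {..<3} \<union> (\<lambda>i. {1, i + 2}) ` {..<3}"
  assumes comparable_iff:
    "\<And>u v. u \<in> N \<Longrightarrow> v \<in> N \<Longrightarrow> u \<noteq> v \<Longrightarrow> t u \<le> t v \<or> t v \<le> t u \<longleftrightarrow> u \<inter> v \<noteq> {}"
  shows False
proof -
  define p q where "p i = {0, i + 2}" and "q i = {1, i + 2}" for i :: nat
  have in_N: "p i \<in> N" "q i \<in> N" if "i < 3" for i
    using that by (simp_all add: N_def p_def q_def)
  show False
  proof (rule triangular_prism_not_comparability[of "t \<circ> p" "t \<circ> q"])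
    show "(t \<circ> p) i \<le> (t \<circ> p) j \<or> (t \<circ> p) j \<le> (t \<circ> p) i" if "i < 3" "j < 3" "i \<noteq> j" for i j
      using comparable_iff[OF in_N(1)[OF that(1)] in_N(1)[OF that(2)]] that
      by (simp add: p_def doubleton_eq_iff)
    show "(t \<circ> q) i \<le> (t \<circ> q) j \<or> (t \<circ> q) j \<le> (t \<circ> q) i" if "i < 3" "j < 3" "i \<noteq> j" for i j
      using comparable_iff[OF in_N(2)[OF that(1)] in_N(2)[OF that(2)]] that
      by (simp add: q_def doubleton_eq_iff)
    show "(t \<circ> p) i \<le> (t \<circ> q) i \<or> (t \<circ> q) i \<le> (t \<circ> p) i" if "i < 3" for i
      using comparable_iff[OF in_N(1)[OF that] in_N(2)[OF that]]
      by (simp add: p_def q_def doubleton_eq_iff)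
    show "\<not> (t \<circ> p) i \<le> (t \<circ> q) j \<and> \<not> (t \<circ> q) j \<le> (t \<circ> p) i" if "i < 3" "j < 3" "i \<noteq> j" for i j
      using comparable_iff[OF in_N(1)[OF that(1)] in_N(2)[OF that(2)]] that
      by (auto simp: p_def q_def doubleton_eq_iff)
  qed
qed

lemma doubleton_in_line_graph_edges_iff:
  assumes "e \<noteq> f"
  shows "{e, f} \<in> line_graph_edges E \<longleftrightarrow> e \<in> E \<and> f \<in> E \<and> e \<inter> f \<noteq> {}"
  using assms unfolding line_graph_edges_def by (auto simp: doubleton_eq_iff)

lemma doubleton_in_K_edges: "i < n \<Longrightarrow> j < n \<Longrightarrow> i \<noteq> j \<Longrightarrow> {i, j} \<in> K_edges n"
  unfolding K_edges_def by blast

theorem theorem3: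
  fixes n :: nat
  assumes "n \<ge> 5"
  shows "\<not> representable (K_edges n) (line_graph_edges (K_edges n))"
proof
  define x where "x = {0, 1 :: nat}"
  define N where "N = (\<lambda>i. {0, i + 2}) ` {..<3} \<union> (\<lambda>i. {1, i + 2}) ` {..<3 :: nat}"
  have x_N_edges: "x \<in> K_edges n" "N \<subseteq> K_edges n"
    using assms by (auto simp: x_def N_def intro!: doubleton_in_K_edges)
  then have adjacent_iff: "{e, f} \<in> line_graph_edges (K_edges n) \<longleftrightarrow> e \<inter> f \<noteq> {}"
    if "e \<in> insert x N" "f \<in> insert x N" "e \<noteq> f" for e f
    using doubleton_in_line_graph_edges_iff[OF that(3)] that(1,2) by blast
  have x_adjacent: "v \<noteq> x \<and> {x, v} \<in> line_graph_edges (K_edges n)" if "v \<in> N" for v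
  proof -
    have "v \<noteq> x" "x \<inter> v \<noteq> {}"
      using that by (auto simp: x_def N_def)
    then show ?thesis
      using adjacent_iff[of x v] that by simp
  qed
  assume "representable (K_edges n) (line_graph_edges (K_edges n))"
  then obtain t :: "nat set \<Rightarrow> nat \<Rightarrow> int" where
    t: "\<And>u v. u \<in> N \<Longrightarrow> v \<in> N \<Longrightarrow> u \<noteq> v \<Longrightarrow>
       {u, v} \<in> line_graph_edges (K_edges n) \<longleftrightarrow> t u \<le> t v \<or> t v \<le> t u"
    using representable_neighbourhood_comparability[OF _ x_N_edges x_adjacent] by blast
  have "t u \<le> t v \<or> t v \<le> t u \<longleftrightarrow> u \<inter> v \<noteq> {}" if "u \<in> N" "v \<in> N" "u \<noteq> v" for u v
    using t[OF that] adjacent_iff[of u v] that by simp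
  then show False
    unfolding N_def by (rule triangular_prism_in_line_graph_not_comparability)
qed

end
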